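(* For every $n\ge2$, every $\omega\in[0,1)$, every $l\in[1,n)$, every $r\in(l,n]$ (integers) and every $t\in\mathbb R$, $$\|[\tau_t^n(c_l),a_r^*]\|\ge\big|(e^{-2iH_n(\omega)t})_{l,r}\big|.$$
   Context: Setting: $V_j=\lambda\chi_{[1-\phi^{-1},1)}(j\phi^{-1}+\omega\bmod1)$, $\lambda>0$, $\phi=\frac{1+\sqrt5}2$; $\mathcal H_n=\bigotimes_{j=1}^n\mathbb C^2$; $H_n^{XY}=-\sum_{j=1}^{n-1}(\sigma^x_j\sigma^x_{j+1}+\sigma^y_j\sigma^y_{j+1})+\sum_{j=1}^nV_j\sigma^z_j$; $\tau_t^n(A)=e^{itH_n^{XY}}Ae^{-itH_n^{XY}}$. $a_j=\frac12(\sigma^x_j-i\sigma^y_j)$, $a_j^*$ its adjoint; $c_1=a_1$, $c_j=\sigma^z_1\cdots\sigma^z_{j-1}a_j$. $H_n(\omega)$ is the $n\times n$ real symmetric tridiagonal matrix with diagonal entries $V_1,\dots,V_n$ and all off-diagonal entries (on the first super- and sub-diagonals) equal to $1$; $(M)_{l,r}$ denotes the $(l,r)$ matrix entry. *)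

theory Defs
  imports "HOL-Analysis.Analysis" "Jordan_Normal_Form.Schur_Decomposition"
begin

definition golden :: real where "golden = (1 + sqrt 5) / 2"

definition fib_pot :: "real \<Rightarrow> real \<Rightarrow> nat \<Rightarrow> real" where
  "fib_pot lam \<omega> j =
     lam * (if frac (real j / golden + \<omega>) \<in> {1 - 1 / golden ..< 1} then 1 else 0)"

text \<open>Kronecker (tensor) product of matrices; with this convention
  kron A B corresponds to A \<otimes> B (first factor most significant).\<close>
definition kron :: "'a :: times mat \<Rightarrow> 'a mat \<Rightarrow> 'a mat" where
  "kron A B = mat (dim_row A * dim_row B) (dim_col A * dim_col B)
     (\<lambda>(i, j). A $$ (i div dim_row B, j div dim_col B) * B $$ (i mod dim_row B, j mod dim_col B))"

definition pauli_x :: "complex mat" where "pauli_x = mat_of_rows_list 2 [[0, 1], [1, 0]]"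
definition pauli_y :: "complex mat" where "pauli_y = mat_of_rows_list 2 [[0, - \<i>], [\<i>, 0]]"
definition pauli_z :: "complex mat" where "pauli_z = mat_of_rows_list 2 [[1, 0], [0, -1]]"

definition site_op :: "nat \<Rightarrow> nat \<Rightarrow> complex mat \<Rightarrow> complex mat" where
  "site_op n j M = kron (kron (1\<^sub>m (2 ^ (j - 1))) M) (1\<^sub>m (2 ^ (n - j)))"

definition sx :: "nat \<Rightarrow> nat \<Rightarrow> complex mat" where "sx n j = site_op n j pauli_x"
definition sy :: "nat \<Rightarrow> nat \<Rightarrow> complex mat" where "sy n j = site_op n j pauli_y"
definition sz :: "nat \<Rightarrow> nat \<Rightarrow> complex mat" where "sz n j = site_op n j pauli_z"

definition msum :: "nat \<Rightarrow> (nat \<Rightarrow> complex mat) \<Rightarrow> nat list \<Rightarrow> complex mat" where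
  "msum d f xs = foldr (\<lambda>k acc. f k + acc) xs (0\<^sub>m d d)"

definition H_XY :: "real \<Rightarrow> real \<Rightarrow> nat \<Rightarrow> complex mat" where
  "H_XY lam \<omega> n =
     - msum (2 ^ n) (\<lambda>j. sx n j * sx n (j + 1) + sy n j * sy n (j + 1)) [1..<n]
     + msum (2 ^ n) (\<lambda>j. complex_of_real (fib_pot lam \<omega> j) \<cdot>\<^sub>m sz n j) [1..<n + 1]"

definition mexp :: "complex mat \<Rightarrow> complex mat" where
  "mexp A = mat (dim_row A) (dim_row A) (\<lambda>(i, j). \<Sum>k. (A ^\<^sub>m k) $$ (i, j) / of_nat (fact k))"

definition tau :: "real \<Rightarrow> real \<Rightarrow> nat \<Rightarrow> real \<Rightarrow> complex mat \<Rightarrow> complex mat" where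
  "tau lam \<omega> n t A =
     mexp ((\<i> * complex_of_real t) \<cdot>\<^sub>m H_XY lam \<omega> n) * A
     * mexp ((- \<i> * complex_of_real t) \<cdot>\<^sub>m H_XY lam \<omega> n)"

definition a_op :: "nat \<Rightarrow> nat \<Rightarrow> complex mat" where
  "a_op n j = (1 / 2 :: complex) \<cdot>\<^sub>m (sx n j - \<i> \<cdot>\<^sub>m sy n j)"

definition c_op :: "nat \<Rightarrow> nat \<Rightarrow> complex mat" where
  "c_op n j = foldr (\<lambda>k acc. sz n k * acc) [1..<j] (a_op n j)"

definition commutator :: "complex mat \<Rightarrow> complex mat \<Rightarrow> complex mat" where
  "commutator A B = A * B - B * A"

definition vnorm :: "complex vec \<Rightarrow> real" where
  "vnorm v = sqrt (\<Sum>i<dim_vec v. (cmod (v $ i))\<^sup>2)"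

definition opnorm :: "complex mat \<Rightarrow> real" where
  "opnorm A = Sup {vnorm (A *\<^sub>v v) | v. v \<in> carrier_vec (dim_col A) \<and> vnorm v \<le> 1}"

text \<open>The one-particle Hamiltonian H_n(omega): n x n tridiagonal, diagonal V_1..V_n,
  off-diagonals 1 (stored 0-indexed).\<close>
definition H_one :: "real \<Rightarrow> real \<Rightarrow> nat \<Rightarrow> complex mat" where
  "H_one lam \<omega> n = mat n n (\<lambda>(i, j).
     if i = j then complex_of_real (fib_pot lam \<omega> (i + 1))
     else if i = j + 1 \<or> j = i + 1 then 1 else 0)"

end

theory Submission
  imports Defs
begin

text \<open>The vacuum (all spins down) is an eigenvector of H_XY, and the single excitations
  a_j^* |vacuum> span an invariant subspace on which H_XY acts, up to the signs (-1)^j, as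
  2 H_n(\<omega>) minus the sum of the potentials V_j. Since a_r annihilates the vacuum, the diagonal
  vacuum entry of the commutator is a phase times (e^{-2iH_n(\<omega>)t})_{l,r} up to sign, and the
  operator norm dominates the modulus of every diagonal entry.\<close>

section \<open>Single-site operators in the computational basis\<close>

lemma index_kron:
  assumes "i < dim_row A * dim_row B" "j < dim_col A * dim_col B"
  shows "kron A B $$ (i, j) =
    A $$ (i div dim_row B, j div dim_col B) * B $$ (i mod dim_row B, j mod dim_col B)"
  using assms unfolding kron_def by auto

text \<open>The basis vector with index x of the n-fold tensor product has at site j the
  state given by bit (n - j) of x.\<close>

lemma less_pow2_iff_bits: "(x::nat) < 2 ^ n \<longleftrightarrow> (\<forall>k\<ge>n. \<not> bit x k)"
  by (simp flip: take_bit_nat_eq_self_iff add: bit_eq_iff bit_take_bit_iff) (use not_le in blast)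

lemma flip_bit_less_pow2:
  assumes "(x::nat) < 2 ^ n" "a < n"
  shows "flip_bit a x < 2 ^ n"
  using assms unfolding less_pow2_iff_bits by (auto simp: bit_flip_bit_iff)

lemma div_mod_pow2_eq_iff_bits:
  fixes x y a :: nat
  shows "x div 2 ^ Suc a = y div 2 ^ Suc a \<and> x mod 2 ^ a = y mod 2 ^ a
    \<longleftrightarrow> (\<forall>k. k \<noteq> a \<longrightarrow> bit x k = bit y k)"
proof -
  have high: "x div 2 ^ Suc a = y div 2 ^ Suc a \<longleftrightarrow> (\<forall>k. bit x (Suc a + k) = bit y (Suc a + k))"
    by (simp only: flip: drop_bit_eq_div) (simp add: bit_eq_iff bit_drop_bit_eq)
  have low: "x mod 2 ^ a = y mod 2 ^ a \<longleftrightarrow> (\<forall>k<a. bit x k = bit y k)"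
    by (simp only: flip: take_bit_eq_mod) (auto simp: bit_eq_iff bit_take_bit_iff)
  have "(\<forall>k. bit x (Suc a + k) = bit y (Suc a + k)) \<and> (\<forall>k<a. bit x k = bit y k)
      \<longleftrightarrow> (\<forall>k. k \<noteq> a \<longrightarrow> bit x k = bit y k)"
  proof (rule iffI, intro allI impI)
    fix k assume bits: "(\<forall>k. bit x (Suc a + k) = bit y (Suc a + k)) \<and> (\<forall>k<a. bit x k = bit y k)"
      and "k \<noteq> a"
    then consider "k < a" | "k = Suc a + (k - Suc a)" by linarith
    then show "bit x k = bit y k" using bits by cases metis+
  qed auto
  then show ?thesis unfolding high low .
qed

lemma eq_flip_bit_iff_bits:
  "(y::nat) = flip_bit a x \<longleftrightarrow> (\<forall>k. k \<noteq> a \<longrightarrow> bit x k = bit y k) \<and> (bit y a \<longleftrightarrow> \<not> bit x a)"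
  unfolding bit_eq_iff[of y "flip_bit a x"] by (auto simp: bit_flip_bit_iff)

lemma eq_iff_bits_except:
  "(y::nat) = x \<longleftrightarrow> (\<forall>k. k \<noteq> a \<longrightarrow> bit x k = bit y k) \<and> (bit y a \<longleftrightarrow> bit x a)"
  unfolding bit_eq_iff[of y x] by auto

lemma pow2_site_split:
  assumes "1 \<le> j" "j \<le> n"
  shows "2 ^ (j - 1) * 2 * 2 ^ (n - j) = (2::nat) ^ n"
  using assms by (simp flip: power_Suc2 power_add)

lemma site_op_carrier_mat:
  assumes "1 \<le> j" "j \<le> n" "M \<in> carrier_mat 2 2"
  shows "site_op n j M \<in> carrier_mat (2 ^ n) (2 ^ n)"
  using assms pow2_site_split[OF assms(1,2)] unfolding site_op_def kron_def by auto

lemma index_site_op: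
  assumes "1 \<le> j" "j \<le> n" "M \<in> carrier_mat 2 2" "x < 2 ^ n" "y < 2 ^ n"
  shows "site_op n j M $$ (x, y) = (if \<forall>k. k \<noteq> n - j \<longrightarrow> bit x k = bit y k
      then M $$ (of_bool (bit x (n - j)), of_bool (bit y (n - j))) else 0)"
proof -
  define a where "a = n - j"
  have N: "(2::nat) ^ n = 2 ^ (j - 1) * 2 * 2 ^ a"
    using pow2_site_split[OF assms(1,2)] unfolding a_def by simp
  have div_bound: "x div 2 ^ a < 2 ^ (j - 1) * 2" "y div 2 ^ a < 2 ^ (j - 1) * 2"
    using assms N by (simp_all add: less_mult_imp_div_less)
  then have high_bound: "x div 2 ^ a div 2 < 2 ^ (j - 1)" "y div 2 ^ a div 2 < 2 ^ (j - 1)"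
    by (simp_all add: less_mult_imp_div_less)
  have digit_bound: "x div 2 ^ a mod 2 < 2" "y div 2 ^ a mod 2 < 2" by auto
  have "site_op n j M $$ (x, y) = kron (1\<^sub>m (2 ^ (j - 1))) M $$ (x div 2 ^ a, y div 2 ^ a)
      * 1\<^sub>m (2 ^ a) $$ (x mod 2 ^ a, y mod 2 ^ a)"
    unfolding site_op_def a_def[symmetric] using assms N by (subst index_kron) (auto simp: kron_def)
  also have "\<dots> = (if x div 2 ^ a div 2 = y div 2 ^ a div 2 then 1 else 0)
      * M $$ (x div 2 ^ a mod 2, y div 2 ^ a mod 2) * (if x mod 2 ^ a = y mod 2 ^ a then 1 else 0)"
    using assms div_bound high_bound digit_bound by (subst index_kron) auto
  finally have entry: "site_op n j M $$ (x, y) =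
      (if x div 2 ^ a div 2 = y div 2 ^ a div 2 \<and> x mod 2 ^ a = y mod 2 ^ a
       then M $$ (x div 2 ^ a mod 2, y div 2 ^ a mod 2) else 0)"
    by simp
  have bits: "x div 2 ^ a div 2 = y div 2 ^ a div 2 \<and> x mod 2 ^ a = y mod 2 ^ a
      \<longleftrightarrow> (\<forall>k. k \<noteq> a \<longrightarrow> bit x k = bit y k)"
    using div_mod_pow2_eq_iff_bits[of x a y] by (simp only: power_Suc2 div_mult2_eq)
  have digit: "z div 2 ^ a mod 2 = of_bool (bit z a)" for z :: nat
    by (simp add: bit_iff_odd odd_iff_mod_2_eq_one)
  show ?thesis using entry unfolding bits digit unfolding a_def .
qed

lemma pauli_carrier_mat:
  "pauli_x \<in> carrier_mat 2 2" "pauli_y \<in> carrier_mat 2 2" "pauli_z \<in> carrier_mat 2 2"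
  by (auto simp: pauli_x_def pauli_y_def pauli_z_def mat_of_rows_list_def)

lemma index_pauli:
  "pauli_x $$ (of_bool b, of_bool c) = (if b \<noteq> c then 1 else 0)"
  "pauli_y $$ (of_bool b, of_bool c) = (if b \<noteq> c then (if b then \<i> else - \<i>) else 0)"
  "pauli_z $$ (of_bool b, of_bool c) = (if b = c then (if b then -1 else 1) else 0)"
  by (cases b; cases c; simp add: pauli_x_def pauli_y_def pauli_z_def mat_of_rows_list_def)+

lemma sx_carrier_mat: "1 \<le> j \<Longrightarrow> j \<le> n \<Longrightarrow> sx n j \<in> carrier_mat (2 ^ n) (2 ^ n)"
  and sy_carrier_mat: "1 \<le> j \<Longrightarrow> j \<le> n \<Longrightarrow> sy n j \<in> carrier_mat (2 ^ n) (2 ^ n)"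
  and sz_carrier_mat: "1 \<le> j \<Longrightarrow> j \<le> n \<Longrightarrow> sz n j \<in> carrier_mat (2 ^ n) (2 ^ n)"
  unfolding sx_def sy_def sz_def by (simp_all add: site_op_carrier_mat pauli_carrier_mat)

context
  fixes n j x y :: nat
  assumes site: "1 \<le> j" "j \<le> n" and basis: "x < 2 ^ n" "y < 2 ^ n"
begin

lemma index_sx: "sx n j $$ (x, y) = (if y = flip_bit (n - j) x then 1 else 0)"
  unfolding sx_def using site basis
  by (subst index_site_op) (auto simp only: pauli_carrier_mat index_pauli eq_flip_bit_iff_bits[of y], auto)

lemma index_sy:
  "sy n j $$ (x, y) = (if y = flip_bit (n - j) x then (if bit x (n - j) then \<i> else - \<i>) else 0)"
  unfolding sy_def using site basis
  by (subst index_site_op) (auto simp only: pauli_carrier_mat index_pauli eq_flip_bit_iff_bits[of y], auto)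

lemma index_sz: "sz n j $$ (x, y) = (if y = x then (if bit x (n - j) then -1 else 1) else 0)"
  unfolding sz_def using site basis
  by (subst index_site_op) (auto simp only: pauli_carrier_mat index_pauli eq_iff_bits_except[of y x "n - j"], auto)

end

section \<open>Entries of products, powers and exponentials of square matrices\<close>

lemma index_mult_mat_sum:
  assumes "A \<in> carrier_mat N N" "B \<in> carrier_mat N N" "x < N" "y < N"
  shows "(A * B) $$ (x, y) = (\<Sum>z<N. A $$ (x, z) * B $$ (z, y))"
  using assms by (auto simp: scalar_prod_def lessThan_atLeast0 intro!: sum.cong)

lemma index_pow_mat_Suc:
  assumes "A \<in> carrier_mat N N" "x < N" "y < N"
  shows "(A ^\<^sub>m Suc K) $$ (x, y) = (\<Sum>z<N. (A ^\<^sub>m K) $$ (x, z) * A $$ (z, y))"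
  using assms by (simp only: pow_mat.simps) (intro index_mult_mat_sum, auto)

lemma index_mult_mat_single_row:
  assumes "A \<in> carrier_mat N N" "B \<in> carrier_mat N N" "x < N" "y < N" "c < N"
    and "\<And>z. z < N \<Longrightarrow> A $$ (x, z) = (if z = c then \<alpha> else 0)"
  shows "(A * B) $$ (x, y) = \<alpha> * B $$ (c, y)"
proof -
  have "(A * B) $$ (x, y) = (\<Sum>z<N. if z = c then \<alpha> * B $$ (c, y) else 0)"
    unfolding index_mult_mat_sum[OF assms(1-4)] using assms(6) by (intro sum.cong) auto
  then show ?thesis using assms(5) by simp
qed

lemma index_mult_mat_single_col:
  assumes "A \<in> carrier_mat N N" "B \<in> carrier_mat N N" "x < N" "y < N" "c < N"
    and "\<And>z. z < N \<Longrightarrow> B $$ (z, y) = (if z = c then \<beta> else 0)"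
  shows "(A * B) $$ (x, y) = A $$ (x, c) * \<beta>"
proof -
  have "(A * B) $$ (x, y) = (\<Sum>z<N. if z = c then A $$ (x, c) * \<beta> else 0)"
    unfolding index_mult_mat_sum[OF assms(1-4)] using assms(6) by (intro sum.cong) auto
  then show ?thesis using assms(5) by simp
qed

lemma index_mexp:
  "A \<in> carrier_mat N N \<Longrightarrow> i < N \<Longrightarrow> j < N \<Longrightarrow>
    mexp A $$ (i, j) = (\<Sum>k. (A ^\<^sub>m k) $$ (i, j) / of_nat (fact k))"
  unfolding mexp_def by auto

lemma mexp_carrier_mat: "A \<in> carrier_mat N N \<Longrightarrow> mexp A \<in> carrier_mat N N"
  unfolding mexp_def by auto

lemma exp_sums_fact: "(\<lambda>k. z ^ k / of_nat (fact k)) sums exp (z::complex)"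
  using exp_converges[of z] by (simp add: scaleR_conv_of_real divide_inverse mult.commute)

lemma pow_mat_eigen_row:
  assumes A: "(A :: complex mat) \<in> carrier_mat N N" and a: "a < N"
    and row: "\<And>y. y < N \<Longrightarrow> A $$ (a, y) = (if y = a then ev else 0)"
  shows "y < N \<Longrightarrow> (A ^\<^sub>m k) $$ (a, y) = (if y = a then ev ^ k else 0)"
proof (induction k arbitrary: y)
  case 0
  then show ?case using A a by auto
next
  case (Suc k)
  have "(A ^\<^sub>m k * A) $$ (a, y) = ev ^ k * A $$ (a, y)"
    by (rule index_mult_mat_single_row[of _ N]) (use A a Suc in auto)
  then show ?case using row[OF Suc.prems] by (auto simp: mult.commute)
qed

lemma mexp_eigen_row:
  assumes A: "A \<in> carrier_mat N N" and a: "a < N" and y: "y < N"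
    and row: "\<And>y. y < N \<Longrightarrow> A $$ (a, y) = (if y = a then ev else 0)"
  shows "mexp A $$ (a, y) = (if y = a then exp ev else 0)"
  using index_mexp[OF A a y] pow_mat_eigen_row[OF A a row y] sums_unique[OF exp_sums_fact[of ev]]
  by auto

lemma pow_mat_invariant_rows:
  assumes A: "A \<in> carrier_mat N N" and B: "B \<in> carrier_mat n n"
    and w_inj: "\<And>j k. j < n \<Longrightarrow> k < n \<Longrightarrow> w j = w k \<longleftrightarrow> j = k"
    and w_less: "\<And>j. j < n \<Longrightarrow> w j < N"
    and row: "\<And>j y. j < n \<Longrightarrow> y < N \<Longrightarrow>
      A $$ (w j, y) = (\<Sum>k<n. if y = w k then B $$ (j, k) else 0)"
  shows "j < n \<Longrightarrow> y < N \<Longrightarrow>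
    (A ^\<^sub>m K) $$ (w j, y) = (\<Sum>k<n. if y = w k then (B ^\<^sub>m K) $$ (j, k) else 0)"
proof (induction K arbitrary: j y)
  case 0
  have "(\<Sum>k<n. if y = w k then (B ^\<^sub>m 0) $$ (j, k) else 0)
      = (\<Sum>k<n. if k = j then (if y = w j then 1 else 0) else 0)"
    using 0 B w_inj by (intro sum.cong) auto
  then show ?case using 0 A B w_less by auto
next
  case (Suc K)
  have "(A ^\<^sub>m Suc K) $$ (w j, y) = (\<Sum>z<N. (A ^\<^sub>m K) $$ (w j, z) * A $$ (z, y))"
    using A Suc w_less by (intro index_pow_mat_Suc) auto
  also have "\<dots> = (\<Sum>z<N. \<Sum>k<n. if z = w k then (B ^\<^sub>m K) $$ (j, k) * A $$ (w k, y) else 0)"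
    using Suc by (intro sum.cong) (auto simp: sum_distrib_right intro!: sum.cong)
  also have "\<dots> = (\<Sum>k<n. (B ^\<^sub>m K) $$ (j, k) * A $$ (w k, y))"
    using w_less by (subst sum.swap) (intro sum.cong, auto)
  also have "\<dots> = (\<Sum>k<n. \<Sum>k'<n. if y = w k' then (B ^\<^sub>m K) $$ (j, k) * B $$ (k, k') else 0)"
    using Suc row by (intro sum.cong) (auto simp: sum_distrib_left intro!: sum.cong)
  also have "\<dots> = (\<Sum>k'<n. if y = w k' then (B ^\<^sub>m Suc K) $$ (j, k') else 0)"
    using B Suc.prems
    by (subst sum.swap) (intro sum.cong, auto simp del: pow_mat.simps simp: index_pow_mat_Suc)
  finally show ?case .
qed

lemma mexp_invariant_rows:
  assumes A: "A \<in> carrier_mat N N" and B: "B \<in> carrier_mat n n"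
    and w_inj: "\<And>j k. j < n \<Longrightarrow> k < n \<Longrightarrow> w j = w k \<longleftrightarrow> j = k"
    and w_less: "\<And>j. j < n \<Longrightarrow> w j < N"
    and row: "\<And>j y. j < n \<Longrightarrow> y < N \<Longrightarrow>
      A $$ (w j, y) = (\<Sum>k<n. if y = w k then B $$ (j, k) else 0)"
    and j: "j < n" and k: "k < n"
  shows "mexp A $$ (w j, w k) = mexp B $$ (j, k)"
proof -
  have "(A ^\<^sub>m K) $$ (w j, w k) = (B ^\<^sub>m K) $$ (j, k)" for K
  proof -
    have "(A ^\<^sub>m K) $$ (w j, w k) = (\<Sum>k'<n. if k' = k then (B ^\<^sub>m K) $$ (j, k) else 0)"
      using pow_mat_invariant_rows[OF A B w_inj w_less row j w_less[OF k]] w_inj k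
      by (auto intro: sum.cong)
    then show ?thesis using k by simp
  qed
  then show ?thesis using index_mexp[OF A w_less[OF j] w_less[OF k]] index_mexp[OF B j k] by simp
qed

lemma norm_index_pow_mat_le:
  assumes A: "(A :: complex mat) \<in> carrier_mat n n"
  shows "j < n \<Longrightarrow> k < n \<Longrightarrow> norm ((A ^\<^sub>m K) $$ (j, k)) \<le> (\<Sum>a<n. \<Sum>b<n. norm (A $$ (a, b))) ^ K"
proof (induction K arbitrary: j k)
  case 0
  then show ?case using A by auto
next
  case (Suc K)
  define R where "R = (\<Sum>a<n. \<Sum>b<n. norm (A $$ (a, b)))"
  have col: "(\<Sum>l<n. norm (A $$ (l, k))) \<le> R"
    unfolding R_def using Suc.prems by (intro sum_mono member_le_sum) auto
  have "norm ((A ^\<^sub>m Suc K) $$ (j, k)) \<le> (\<Sum>l<n. norm ((A ^\<^sub>m K) $$ (j, l)) * norm (A $$ (l, k)))"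
    unfolding index_pow_mat_Suc[OF A Suc.prems] by (auto simp: norm_mult intro: order.trans[OF norm_sum])
  also have "\<dots> \<le> (\<Sum>l<n. R ^ K * norm (A $$ (l, k)))"
    using Suc unfolding R_def by (intro sum_mono mult_right_mono) auto
  also have "\<dots> \<le> R ^ K * R"
    using col by (simp add: sum_distrib_left[symmetric] R_def mult_left_mono sum_nonneg)
  finally show ?case unfolding R_def by (simp add: mult.commute)
qed

lemma summable_norm_mexp_series:
  assumes A: "(A :: complex mat) \<in> carrier_mat n n" and "j < n" "k < n"
  shows "summable (\<lambda>K. norm ((A ^\<^sub>m K) $$ (j, k) / of_nat (fact K)))"
proof (rule summable_comparison_test')
  define R where "R = (\<Sum>a<n. \<Sum>b<n. norm (A $$ (a, b)))"
  show "summable (\<lambda>K. R ^ K / fact K)"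
    using summable_exp[of R] by (simp add: divide_inverse mult.commute)
  show "norm (norm ((A ^\<^sub>m K) $$ (j, k) / of_nat (fact K))) \<le> R ^ K / fact K" for K
    using norm_index_pow_mat_le[OF A assms(2,3), of K] unfolding R_def
    by (simp add: norm_divide divide_right_mono)
qed

text \<open>Conjugation by the diagonal matrix diag(u) with inverse diag(v).\<close>

lemma pow_mat_diagonal_conj:
  assumes B: "(B :: complex mat) \<in> carrier_mat n n" and C: "C \<in> carrier_mat n n"
    and inv: "\<And>j. j < n \<Longrightarrow> v j * u j = 1"
    and BC: "\<And>j k. j < n \<Longrightarrow> k < n \<Longrightarrow> B $$ (j, k) = u j * v k * C $$ (j, k)"
  shows "j < n \<Longrightarrow> k < n \<Longrightarrow> (B ^\<^sub>m K) $$ (j, k) = u j * v k * (C ^\<^sub>m K) $$ (j, k)"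
proof (induction K arbitrary: j k)
  case 0
  then show ?case using B C inv by (auto simp: mult.commute)
next
  case (Suc K)
  have "(B ^\<^sub>m K) $$ (j, l) * B $$ (l, k) = u j * v k * ((C ^\<^sub>m K) $$ (j, l) * C $$ (l, k))"
    if "l < n" for l
  proof -
    have "(B ^\<^sub>m K) $$ (j, l) * B $$ (l, k)
        = (v l * u l) * (u j * v k * ((C ^\<^sub>m K) $$ (j, l) * C $$ (l, k)))"
      using Suc.IH[OF Suc.prems(1) that] BC[OF that Suc.prems(2)] by (simp add: mult_ac)
    then show ?thesis using inv[OF that] by simp
  qed
  then show ?case
    unfolding index_pow_mat_Suc[OF B Suc.prems] index_pow_mat_Suc[OF C Suc.prems]
    by (simp add: sum_distrib_left)
qed

lemma mexp_diagonal_conj: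
  assumes B: "(B :: complex mat) \<in> carrier_mat n n" and C: "C \<in> carrier_mat n n"
    and inv: "\<And>j. j < n \<Longrightarrow> v j * u j = 1"
    and BC: "\<And>j k. j < n \<Longrightarrow> k < n \<Longrightarrow> B $$ (j, k) = u j * v k * C $$ (j, k)"
    and j: "j < n" and k: "k < n"
  shows "mexp B $$ (j, k) = u j * v k * mexp C $$ (j, k)"
proof -
  have "summable (\<lambda>K. (C ^\<^sub>m K) $$ (j, k) / of_nat (fact K))"
    by (rule summable_norm_cancel[OF summable_norm_mexp_series[OF C j k]])
  from suminf_mult[OF this, of "u j * v k"] show ?thesis
    using index_mexp[OF B j k] index_mexp[OF C j k] pow_mat_diagonal_conj[OF B C inv BC j k]
    by simp
qed

lemma pascal_sum_step:
  fixes c :: complex and g :: "nat \<Rightarrow> complex"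
  shows "(\<Sum>i\<le>K. of_nat (K choose i) * c ^ (K - i) * g (Suc i))
      + c * (\<Sum>i\<le>K. of_nat (K choose i) * c ^ (K - i) * g i)
    = (\<Sum>i\<le>Suc K. of_nat (Suc K choose i) * c ^ (Suc K - i) * g i)"
proof -
  have "c * (\<Sum>i\<le>K. of_nat (K choose i) * c ^ (K - i) * g i)
      = (\<Sum>i\<le>Suc K. of_nat (K choose i) * c ^ (Suc K - i) * g i)"
    unfolding sum_distrib_left by (simp add: Suc_diff_le mult_ac)
  also have "\<dots> = c ^ Suc K * g 0 + (\<Sum>i\<le>K. of_nat (K choose Suc i) * c ^ (K - i) * g (Suc i))"
    unfolding sum.atMost_Suc_shift by simp
  finally show ?thesis
    unfolding sum.atMost_Suc_shift by (simp add: ring_distribs sum.distrib algebra_simps)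
qed

lemma pow_mat_add_scalar:
  assumes Y: "(Y :: complex mat) \<in> carrier_mat n n"
  shows "j < n \<Longrightarrow> k < n \<Longrightarrow> ((Y + c \<cdot>\<^sub>m 1\<^sub>m n) ^\<^sub>m K) $$ (j, k)
    = (\<Sum>i\<le>K. of_nat (K choose i) * c ^ (K - i) * (Y ^\<^sub>m i) $$ (j, k))"
proof (induction K arbitrary: j k)
  case 0
  then show ?case using Y by simp
next
  case (Suc K)
  define Z where "Z = Y + c \<cdot>\<^sub>m 1\<^sub>m n"
  have Z: "Z \<in> carrier_mat n n" unfolding Z_def using Y by auto
  have IH: "(Z ^\<^sub>m K) $$ (j, l) = (\<Sum>i\<le>K. of_nat (K choose i) * c ^ (K - i) * (Y ^\<^sub>m i) $$ (j, l))"
    if "l < n" for l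
    unfolding Z_def using Suc.prems that by (intro Suc.IH) auto
  have "(Z ^\<^sub>m Suc K) $$ (j, k) = (\<Sum>l<n. (Z ^\<^sub>m K) $$ (j, l) * Y $$ (l, k))
      + (\<Sum>l<n. if l = k then c * (Z ^\<^sub>m K) $$ (j, l) else 0)"
    unfolding index_pow_mat_Suc[OF Z Suc.prems] sum.distrib[symmetric]
    using Y Suc.prems by (intro sum.cong) (auto simp: Z_def distrib_left mult.commute)
  also have "\<dots> = (\<Sum>l<n. (Z ^\<^sub>m K) $$ (j, l) * Y $$ (l, k)) + c * (Z ^\<^sub>m K) $$ (j, k)"
    using Suc.prems by simp
  also have "(\<Sum>l<n. (Z ^\<^sub>m K) $$ (j, l) * Y $$ (l, k))
      = (\<Sum>i\<le>K. of_nat (K choose i) * c ^ (K - i) * (\<Sum>l<n. (Y ^\<^sub>m i) $$ (j, l) * Y $$ (l, k)))"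
    by (simp add: IH sum_distrib_left sum_distrib_right mult.assoc sum.swap[of _ "{..<n}"])
  also have "\<dots> = (\<Sum>i\<le>K. of_nat (K choose i) * c ^ (K - i) * (Y ^\<^sub>m Suc i) $$ (j, k))"
    using index_pow_mat_Suc[OF Y Suc.prems] by simp
  also have "(\<Sum>i\<le>K. of_nat (K choose i) * c ^ (K - i) * (Y ^\<^sub>m Suc i) $$ (j, k))
      + c * (Z ^\<^sub>m K) $$ (j, k)
    = (\<Sum>i\<le>Suc K. of_nat (Suc K choose i) * c ^ (Suc K - i) * (Y ^\<^sub>m i) $$ (j, k))"
    unfolding IH[OF Suc.prems(2)] by (fact pascal_sum_step[of K c "\<lambda>i. (Y ^\<^sub>m i) $$ (j, k)"])
  finally show ?case unfolding Z_def .
qed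

lemma mexp_add_scalar:
  assumes Y: "(Y :: complex mat) \<in> carrier_mat n n" and j: "j < n" and k: "k < n"
  shows "mexp (Y + c \<cdot>\<^sub>m 1\<^sub>m n) $$ (j, k) = exp c * mexp Y $$ (j, k)"
proof -
  define a where "a = (\<lambda>i. (Y ^\<^sub>m i) $$ (j, k) / of_nat (fact i))"
  define b where "b = (\<lambda>m. c ^ m / of_nat (fact m) :: complex)"
  have "(\<lambda>m. norm (c ^ m /\<^sub>R fact m)) = (\<lambda>m. norm (b m))"
    unfolding b_def by (rule ext) (simp add: scaleR_conv_of_real divide_inverse mult.commute)
  then have "summable (\<lambda>m. norm (b m))" using summable_norm_exp[of c] by simp
  moreover have "summable (\<lambda>m. norm (a m))"
    unfolding a_def by (rule summable_norm_mexp_series[OF Y j k])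
  ultimately have "(\<Sum>m. a m) * (\<Sum>m. b m) = (\<Sum>K. \<Sum>i\<le>K. a i * b (K - i))"
    by (intro Cauchy_product)
  also have "\<dots> = (\<Sum>K. ((Y + c \<cdot>\<^sub>m 1\<^sub>m n) ^\<^sub>m K) $$ (j, k) / of_nat (fact K))"
  proof (rule suminf_cong)
    fix K
    have "of_nat (K choose i) * c ^ (K - i) * (Y ^\<^sub>m i) $$ (j, k) / of_nat (fact K) = a i * b (K - i)"
      if "i \<le> K" for i
    proof -
      have nonzero: "(of_nat (K choose i) :: complex) \<noteq> 0" using that by simp
      have fact_eq: "(of_nat (fact K) :: complex) = of_nat (K choose i) * (of_nat (fact i) * of_nat (fact (K - i)))"
        by (simp only: of_nat_mult[symmetric] binomial_fact_lemma[OF that, symmetric] mult_ac)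
      have "of_nat (K choose i) * c ^ (K - i) * (Y ^\<^sub>m i) $$ (j, k) / of_nat (fact K)
          = of_nat (K choose i) * (c ^ (K - i) * (Y ^\<^sub>m i) $$ (j, k))
            / (of_nat (K choose i) * (of_nat (fact i) * of_nat (fact (K - i))))"
        by (simp only: fact_eq mult.assoc)
      also have "\<dots> = c ^ (K - i) * (Y ^\<^sub>m i) $$ (j, k) / (of_nat (fact i) * of_nat (fact (K - i)))"
        by (rule mult_divide_mult_cancel_left[OF nonzero])
      also have "\<dots> = a i * b (K - i)" by (simp add: a_def b_def mult.commute)
      finally show ?thesis .
    qed
    then show "(\<Sum>i\<le>K. a i * b (K - i)) = ((Y + c \<cdot>\<^sub>m 1\<^sub>m n) ^\<^sub>m K) $$ (j, k) / of_nat (fact K)"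
      unfolding pow_mat_add_scalar[OF Y j k] sum_divide_distrib by simp
  qed
  also have "\<dots> = mexp (Y + c \<cdot>\<^sub>m 1\<^sub>m n) $$ (j, k)"
    using Y j k by (intro index_mexp[symmetric]) auto
  moreover have "(\<Sum>m. a m) = mexp Y $$ (j, k)" unfolding a_def using index_mexp[OF Y j k] ..
  moreover have "(\<Sum>m. b m) = exp c" unfolding b_def by (rule sums_unique[OF exp_sums_fact, symmetric])
  ultimately show ?thesis by (simp add: mult.commute)
qed

lemma vnorm_eq_L2_set: "vnorm v = L2_set (\<lambda>i. cmod (v $ i)) {..<dim_vec v}"
  unfolding vnorm_def L2_set_def ..

lemma vnorm_mult_mat_vec_le:
  assumes M: "M \<in> carrier_mat N N" and v: "v \<in> carrier_vec N" "vnorm v \<le> 1"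
  shows "vnorm (M *\<^sub>v v) \<le> (\<Sum>i<N. \<Sum>j<N. cmod (M $$ (i, j)))"
proof -
  have v_bound: "cmod (v $ j) \<le> 1" if "j < N" for j
    using member_le_L2_set[of "{..<N}" j "\<lambda>i. cmod (v $ i)"] v that by (simp add: vnorm_eq_L2_set)
  have dim: "dim_vec (M *\<^sub>v v) = N" using M by simp
  have "vnorm (M *\<^sub>v v) \<le> (\<Sum>i<N. cmod ((M *\<^sub>v v) $ i))"
    unfolding vnorm_eq_L2_set dim by (intro L2_set_le_sum) simp
  also have "\<dots> \<le> (\<Sum>i<N. \<Sum>j<N. cmod (M $$ (i, j)))"
  proof (rule sum_mono)
    fix i assume "i \<in> {..<N}"
    then have "(M *\<^sub>v v) $ i = (\<Sum>j<N. M $$ (i, j) * v $ j)"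
      using M v by (auto simp: scalar_prod_def lessThan_atLeast0 intro!: sum.cong)
    then have "cmod ((M *\<^sub>v v) $ i) \<le> (\<Sum>j<N. cmod (M $$ (i, j)) * cmod (v $ j))"
      by (auto intro: order.trans[OF norm_sum] simp: norm_mult)
    also have "\<dots> \<le> (\<Sum>j<N. cmod (M $$ (i, j)))"
      using v_bound by (intro sum_mono) (auto intro: mult_left_le)
    finally show "cmod ((M *\<^sub>v v) $ i) \<le> (\<Sum>j<N. cmod (M $$ (i, j)))" .
  qed
  finally show ?thesis .
qed

lemma opnorm_ge_diag_entry:
  assumes M: "M \<in> carrier_mat N N" and a: "a < N"
  shows "cmod (M $$ (a, a)) \<le> opnorm M"
proof -
  define S where "S = {vnorm (M *\<^sub>v v) | v. v \<in> carrier_vec (dim_col M) \<and> vnorm v \<le> 1}"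
  define e where "e = (unit_vec N a :: complex vec)"
  have "(\<Sum>i<N. (cmod (e $ i))\<^sup>2) = (\<Sum>i<N. if i = a then 1 else 0)"
    unfolding e_def using a by (intro sum.cong) auto
  then have "vnorm e = 1" unfolding vnorm_def e_def using a by simp
  then have mem: "vnorm (M *\<^sub>v e) \<in> S" unfolding S_def e_def using M by auto
  have "bdd_above S"
    unfolding S_def using M vnorm_mult_mat_vec_le[OF M] by (intro bdd_aboveI) auto
  have "cmod (M $$ (a, a)) \<le> vnorm (M *\<^sub>v e)"
    using member_le_L2_set[of "{..<N}" a "\<lambda>i. cmod ((M *\<^sub>v e) $ i)"] M a
    by (simp add: vnorm_eq_L2_set e_def)
  also have "\<dots> \<le> Sup S" by (rule cSup_upper[OF mem \<open>bdd_above S\<close>])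
  finally show ?thesis unfolding opnorm_def S_def .
qed

section \<open>The XY Hamiltonian on the vacuum and on single excitations\<close>

definition hopping :: "nat \<Rightarrow> nat \<Rightarrow> complex mat" where
  "hopping n j = sx n j * sx n (j + 1) + sy n j * sy n (j + 1)"

lemma hopping_carrier_mat:
  assumes "1 \<le> m" "m + 1 \<le> n"
  shows "hopping n m \<in> carrier_mat (2 ^ n) (2 ^ n)"
  using assms sx_carrier_mat[of m n] sx_carrier_mat[of "m + 1" n] sy_carrier_mat[of m n]
    sy_carrier_mat[of "m + 1" n]
  unfolding hopping_def by auto

lemma index_hopping:
  assumes "1 \<le> m" "m + 1 \<le> n" "x < 2 ^ n" "y < 2 ^ n"
  shows "hopping n m $$ (x, y) = (if bit x (n - m) \<noteq> bit x (n - Suc m)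
    \<and> y = flip_bit (n - Suc m) (flip_bit (n - m) x) then 2 else 0)"
proof -
  let ?c = "flip_bit (n - m) x"
  have c: "?c < 2 ^ n" using assms by (intro flip_bit_less_pow2) auto
  have carrier: "sx n m \<in> carrier_mat (2 ^ n) (2 ^ n)" "sx n (m + 1) \<in> carrier_mat (2 ^ n) (2 ^ n)"
    "sy n m \<in> carrier_mat (2 ^ n) (2 ^ n)" "sy n (m + 1) \<in> carrier_mat (2 ^ n) (2 ^ n)"
    using assms by (auto intro!: sx_carrier_mat sy_carrier_mat)
  have xx: "(sx n m * sx n (m + 1)) $$ (x, y) = 1 * sx n (m + 1) $$ (?c, y)"
    by (rule index_mult_mat_single_row[OF carrier(1,2) assms(3,4) c]) (use assms in \<open>auto simp: index_sx\<close>)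
  have yy: "(sy n m * sy n (m + 1)) $$ (x, y) = (if bit x (n - m) then \<i> else - \<i>) * sy n (m + 1) $$ (?c, y)"
    by (rule index_mult_mat_single_row[OF carrier(3,4) assms(3,4) c]) (use assms in \<open>auto simp: index_sy\<close>)
  have sites: "n - (m + 1) = n - Suc m" "n - Suc m \<noteq> n - m" using assms by auto
  have "sx n (m + 1) $$ (?c, y) = (if y = flip_bit (n - Suc m) ?c then 1 else 0)"
    using index_sx[of "m + 1" n ?c y] assms c sites by simp
  moreover have "sy n (m + 1) $$ (?c, y) = (if y = flip_bit (n - Suc m) ?c
      then (if bit x (n - Suc m) then \<i> else - \<i>) else 0)"
    using index_sy[of "m + 1" n ?c y] assms c sites by (simp add: bit_flip_bit_iff)
  moreover have "hopping n m $$ (x, y) = (sx n m * sx n (m + 1)) $$ (x, y) + (sy n m * sy n (m + 1)) $$ (x, y)"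
    unfolding hopping_def using carrier assms by (subst index_add_mat) auto
  ultimately show ?thesis unfolding xx yy by auto
qed

lemma msum_carrier_mat:
  "(\<And>k. k \<in> set xs \<Longrightarrow> f k \<in> carrier_mat d d) \<Longrightarrow> msum d f xs \<in> carrier_mat d d"
  by (induction xs) (auto simp: msum_def)

lemma index_msum:
  assumes "\<And>k. k \<in> set xs \<Longrightarrow> f k \<in> carrier_mat d d" "x < d" "y < d"
  shows "msum d f xs $$ (x, y) = (\<Sum>k\<leftarrow>xs. f k $$ (x, y))"
  using assms
proof (induction xs)
  case (Cons a xs)
  then have "msum d f xs \<in> carrier_mat d d" by (intro msum_carrier_mat) auto
  with Cons show ?case by (simp add: msum_def)
qed (simp add: msum_def)

abbreviation pot :: "real \<Rightarrow> real \<Rightarrow> nat \<Rightarrow> complex" where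
  "pot lam \<omega> j \<equiv> complex_of_real (fib_pot lam \<omega> j)"

abbreviation pot_sum :: "real \<Rightarrow> real \<Rightarrow> nat \<Rightarrow> complex" where
  "pot_sum lam \<omega> n \<equiv> \<Sum>m = 1..n. pot lam \<omega> m"

lemma H_XY_carrier_mat: "H_XY lam \<omega> n \<in> carrier_mat (2 ^ n) (2 ^ n)"
  unfolding H_XY_def
  by (intro add_carrier_mat uminus_carrier_mat msum_carrier_mat smult_carrier_mat sz_carrier_mat)
    (auto simp flip: hopping_def intro: hopping_carrier_mat)

lemma index_H_XY:
  assumes "x < 2 ^ n" "y < 2 ^ n"
  shows "H_XY lam \<omega> n $$ (x, y) =
    - (\<Sum>m = 1..<n. hopping n m $$ (x, y)) + (\<Sum>m = 1..n. pot lam \<omega> m * sz n m $$ (x, y))"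
proof -
  have hop: "msum (2 ^ n) (hopping n) [1..<n] $$ (x, y) = (\<Sum>m = 1..<n. hopping n m $$ (x, y))"
    using assms by (subst index_msum) (auto simp: hopping_carrier_mat sum_set_upt_conv_sum_list_nat[symmetric])
  have "msum (2 ^ n) (\<lambda>j. pot lam \<omega> j \<cdot>\<^sub>m sz n j) [1..<n + 1] $$ (x, y)
      = (\<Sum>m\<leftarrow>[1..<n + 1]. (pot lam \<omega> m \<cdot>\<^sub>m sz n m) $$ (x, y))"
    using assms sz_carrier_mat by (intro index_msum) auto
  also have "\<dots> = (\<Sum>m = 1..n. (pot lam \<omega> m \<cdot>\<^sub>m sz n m) $$ (x, y))"
    by (simp only: sum_set_upt_conv_sum_list_nat[symmetric] set_upt Suc_eq_plus1[symmetric]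
        atLeastLessThanSuc_atLeastAtMost)
  also have "\<dots> = (\<Sum>m = 1..n. pot lam \<omega> m * sz n m $$ (x, y))"
  proof (rule sum.cong)
    fix m assume "m \<in> {1..n}"
    then have "sz n m \<in> carrier_mat (2 ^ n) (2 ^ n)" by (intro sz_carrier_mat) auto
    then show "(pot lam \<omega> m \<cdot>\<^sub>m sz n m) $$ (x, y) = pot lam \<omega> m * sz n m $$ (x, y)"
      using assms by simp
  qed simp
  finally have field: "msum (2 ^ n) (\<lambda>j. pot lam \<omega> j \<cdot>\<^sub>m sz n j) [1..<n + 1] $$ (x, y) = \<dots>" .
  define P where "P = msum (2 ^ n) (hopping n) [1..<n]"
  define Q where "Q = msum (2 ^ n) (\<lambda>j. pot lam \<omega> j \<cdot>\<^sub>m sz n j) [1..<n + 1]"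
  have "P \<in> carrier_mat (2 ^ n) (2 ^ n)"
    unfolding P_def by (intro msum_carrier_mat hopping_carrier_mat) auto
  moreover have "Q \<in> carrier_mat (2 ^ n) (2 ^ n)"
    unfolding Q_def by (intro msum_carrier_mat smult_carrier_mat sz_carrier_mat) auto
  moreover have "H_XY lam \<omega> n = - P + Q"
    unfolding H_XY_def P_def Q_def hopping_def[abs_def] ..
  ultimately have "H_XY lam \<omega> n $$ (x, y) = - (P $$ (x, y)) + Q $$ (x, y)"
    using assms by simp
  then show ?thesis by (simp only: P_def Q_def hop field)
qed

text \<open>A set bit is a spin down, so vacuum n (all spins down) is annihilated by every a_op n j,
  and excitation n j is the state with the single spin at site j + 1 flipped up: the index j is
  0-based like the rows of H_one.\<close>

definition vacuum :: "nat \<Rightarrow> nat" where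
  "vacuum n = 2 ^ n - 1"

definition excitation :: "nat \<Rightarrow> nat \<Rightarrow> nat" where
  "excitation n j = unset_bit (n - Suc j) (vacuum n)"

lemma bit_vacuum: "bit (vacuum n) k \<longleftrightarrow> k < n"
  unfolding vacuum_def mask_eq_exp_minus_1[symmetric] by (simp add: bit_mask_iff)

lemma bit_excitation: "bit (excitation n j) k \<longleftrightarrow> k < n \<and> k \<noteq> n - Suc j"
  unfolding excitation_def by (auto simp: bit_unset_bit_iff bit_vacuum)

lemma vacuum_less: "vacuum n < 2 ^ n"
  unfolding less_pow2_iff_bits by (simp add: bit_vacuum)

lemma excitation_less: "excitation n j < 2 ^ n"
  unfolding less_pow2_iff_bits by (simp add: bit_excitation)

lemma excitation_eq_iff:
  assumes "j < n" "k < n"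
  shows "excitation n j = excitation n k \<longleftrightarrow> j = k"
proof
  assume "excitation n j = excitation n k"
  then have "bit (excitation n j) (n - Suc j) = bit (excitation n k) (n - Suc j)" by simp
  then show "j = k" using assms by (auto simp: bit_excitation)
qed simp

lemma H_XY_vacuum_row:
  assumes "y < 2 ^ n"
  shows "H_XY lam \<omega> n $$ (vacuum n, y) = (if y = vacuum n then - pot_sum lam \<omega> n else 0)"
proof -
  have "hopping n m $$ (vacuum n, y) = 0" if "m \<in> {1..<n}" for m
    using assms that by (subst index_hopping) (auto simp: vacuum_less bit_vacuum)
  moreover have "sz n m $$ (vacuum n, y) = (if y = vacuum n then -1 else 0)" if "m \<in> {1..n}" for m
    using assms that by (subst index_sz) (auto simp: vacuum_less bit_vacuum)
  ultimately show ?thesis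
    using assms by (simp add: index_H_XY[OF vacuum_less] sum_negf)
qed

lemma hopping_excitation_row:
  assumes "1 \<le> m" "m + 1 \<le> n" "y < 2 ^ n" "j < n"
  shows "hopping n m $$ (excitation n j, y) =
    (if m = Suc j \<and> y = excitation n (Suc j) then 2 else 0)
    + (if m = j \<and> y = excitation n (j - 1) then 2 else 0)"
proof -
  have row: "hopping n m $$ (excitation n j, y) =
      (if bit (excitation n j) (n - m) \<noteq> bit (excitation n j) (n - Suc m)
        \<and> y = flip_bit (n - Suc m) (flip_bit (n - m) (excitation n j)) then 2 else 0)"
    using assms by (intro index_hopping) (auto simp: excitation_less)
  consider "m = Suc j" | "m = j" | "m \<noteq> Suc j" "m \<noteq> j" by blast
  then show ?thesis
  proof cases
    case 1
    then have "flip_bit (n - Suc m) (flip_bit (n - m) (excitation n j)) = excitation n (Suc j)"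
      using assms by (intro bit_eqI) (auto simp: bit_flip_bit_iff bit_excitation)
    then show ?thesis unfolding row using assms 1 by (auto simp: bit_excitation)
  next
    case 2
    then have "flip_bit (n - Suc m) (flip_bit (n - m) (excitation n j)) = excitation n (j - 1)"
      using assms by (intro bit_eqI) (auto simp: bit_flip_bit_iff bit_excitation)
    then show ?thesis unfolding row using assms 2 by (auto simp: bit_excitation)
  next
    case 3
    then have "bit (excitation n j) (n - m) = bit (excitation n j) (n - Suc m)"
      using assms by (auto simp: bit_excitation)
    then show ?thesis unfolding row using 3 by auto
  qed
qed

lemma sz_excitation_row:
  assumes "1 \<le> m" "m \<le> n" "y < 2 ^ n" "j < n"
  shows "sz n m $$ (excitation n j, y) = (if y = excitation n j then (if m = Suc j then 1 else -1) else 0)"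
  using assms by (subst index_sz) (auto simp: excitation_less bit_excitation)

lemma sum_if_eq_and:
  "finite A \<Longrightarrow> (\<Sum>m\<in>A. if m = c \<and> P then f else 0) = (if c \<in> A \<and> P then f else 0)"
proof -
  assume "finite A"
  have "(\<Sum>m\<in>A. if m = c \<and> P then f else 0) = (\<Sum>m\<in>A. if m = c then (if P then f else 0) else 0)"
    by (rule sum.cong) auto
  then show ?thesis using \<open>finite A\<close> by simp
qed

lemma H_XY_excitation_row_cases:
  assumes "y < 2 ^ n" "j < n"
  shows "H_XY lam \<omega> n $$ (excitation n j, y) =
     - ((if Suc j < n \<and> y = excitation n (Suc j) then 2 else 0)
        + (if 1 \<le> j \<and> y = excitation n (j - 1) then 2 else 0))
     + (if y = excitation n j then 2 * pot lam \<omega> (Suc j) - pot_sum lam \<omega> n else 0)"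
proof -
  have "(\<Sum>m = 1..<n. hopping n m $$ (excitation n j, y))
      = (\<Sum>m = 1..<n. (if m = Suc j \<and> y = excitation n (Suc j) then 2 else 0)
          + (if m = j \<and> y = excitation n (j - 1) then 2 else 0))"
    using assms by (intro sum.cong) (auto simp: hopping_excitation_row)
  also have "\<dots> = (if Suc j < n \<and> y = excitation n (Suc j) then 2 else 0)
      + (if 1 \<le> j \<and> y = excitation n (j - 1) then 2 else 0)"
    unfolding sum.distrib using assms by (simp add: sum_if_eq_and)
  finally have hop: "(\<Sum>m = 1..<n. hopping n m $$ (excitation n j, y)) = \<dots>" .
  have "(\<Sum>m = 1..n. pot lam \<omega> m * sz n m $$ (excitation n j, y))
      = (\<Sum>m = 1..n. if y = excitation n j then 2 * (if m = Suc j then pot lam \<omega> m else 0) - pot lam \<omega> m else 0)"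
    using assms by (intro sum.cong) (auto simp: sz_excitation_row)
  also have "\<dots> = (if y = excitation n j then 2 * pot lam \<omega> (Suc j) - pot_sum lam \<omega> n else 0)"
    using assms by (simp add: sum_subtractf sum_distrib_left[symmetric])
  finally have field: "(\<Sum>m = 1..n. pot lam \<omega> m * sz n m $$ (excitation n j, y)) = \<dots>" .
  show ?thesis using index_H_XY[OF excitation_less assms(1)] by (simp only: hop field)
qed

text \<open>The Hamiltonian H_XY restricted to the single excitations, in the basis excitation n j.\<close>

definition excitation_ham :: "real \<Rightarrow> real \<Rightarrow> nat \<Rightarrow> complex mat" where
  "excitation_ham lam \<omega> n = mat n n (\<lambda>(j, k).
     if j = k then 2 * pot lam \<omega> (Suc j) - pot_sum lam \<omega> n
     else if j = Suc k \<or> k = Suc j then -2 else 0)"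

lemma H_XY_excitation_row:
  assumes "y < 2 ^ n" "j < n"
  shows "H_XY lam \<omega> n $$ (excitation n j, y) =
    (\<Sum>k<n. if y = excitation n k then excitation_ham lam \<omega> n $$ (j, k) else 0)"
proof (cases "\<exists>k<n. y = excitation n k")
  case True
  then obtain k where k: "k < n" "y = excitation n k" by blast
  have "(\<Sum>k'<n. if y = excitation n k' then excitation_ham lam \<omega> n $$ (j, k') else 0)
      = (\<Sum>k'<n. if k' = k then excitation_ham lam \<omega> n $$ (j, k) else 0)"
    using k excitation_eq_iff by (intro sum.cong) auto
  also have "\<dots> = excitation_ham lam \<omega> n $$ (j, k)" using k by simp
  finally have sum: "(\<Sum>k'<n. if y = excitation n k' then excitation_ham lam \<omega> n $$ (j, k') else 0)
    = excitation_ham lam \<omega> n $$ (j, k)" .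
  have "Suc j < n \<and> y = excitation n (Suc j) \<longleftrightarrow> k = Suc j"
    "1 \<le> j \<and> y = excitation n (j - 1) \<longleftrightarrow> k = j - 1 \<and> 1 \<le> j"
    "y = excitation n j \<longleftrightarrow> k = j"
    using k assms excitation_eq_iff by auto
  then show ?thesis
    unfolding H_XY_excitation_row_cases[OF assms] sum using k assms by (auto simp: excitation_ham_def)
next
  case False
  then show ?thesis
    unfolding H_XY_excitation_row_cases[OF assms] using assms by auto
qed

section \<open>The vacuum expectation of the commutator\<close>

lemma a_op_carrier_mat:
  assumes "1 \<le> j" "j \<le> n"
  shows "a_op n j \<in> carrier_mat (2 ^ n) (2 ^ n)"
  using assms sx_carrier_mat[OF assms] sy_carrier_mat[OF assms] unfolding a_op_def by auto

lemma index_a_op: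
  assumes "1 \<le> j" "j \<le> n" "x < 2 ^ n" "y < 2 ^ n"
  shows "a_op n j $$ (x, y) = (if bit x (n - j) \<and> y = flip_bit (n - j) x then 1 else 0)"
proof -
  have entry: "a_op n j $$ (x, y) = (1 / 2) * (sx n j $$ (x, y) - \<i> * sy n j $$ (x, y))"
    unfolding a_op_def using assms sx_carrier_mat[OF assms(1,2)] sy_carrier_mat[OF assms(1,2)] by simp
  show ?thesis unfolding entry using assms by (simp add: index_sx index_sy)
qed

lemma a_op_vacuum_row:
  assumes "1 \<le> l" "l \<le> n" "y < 2 ^ n"
  shows "a_op n l $$ (vacuum n, y) = (if y = excitation n (l - 1) then 1 else 0)"
proof -
  have "flip_bit (n - l) (vacuum n) = excitation n (l - 1)"
    using assms by (intro bit_eqI) (auto simp: bit_flip_bit_iff bit_vacuum bit_excitation)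
  then show ?thesis using assms by (subst index_a_op) (auto simp: vacuum_less bit_vacuum)
qed

lemma a_op_vacuum_col:
  assumes "1 \<le> l" "l \<le> n" "z < 2 ^ n"
  shows "a_op n l $$ (z, vacuum n) = 0"
proof -
  have "bit (vacuum n) (n - l)" using assms by (simp add: bit_vacuum)
  then have "\<not> (bit z (n - l) \<and> vacuum n = flip_bit (n - l) z)"
    by (auto simp: bit_flip_bit_iff)
  then show ?thesis using assms by (subst index_a_op) (auto simp: vacuum_less)
qed

lemma sz_product_vacuum_row:
  assumes "\<And>k. k \<in> set ks \<Longrightarrow> 1 \<le> k \<and> k \<le> n" "X \<in> carrier_mat (2 ^ n) (2 ^ n)"
  shows "foldr (\<lambda>k acc. sz n k * acc) ks X \<in> carrier_mat (2 ^ n) (2 ^ n) \<and>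
    (\<forall>y<2 ^ n. foldr (\<lambda>k acc. sz n k * acc) ks X $$ (vacuum n, y) = (-1) ^ length ks * X $$ (vacuum n, y))"
  using assms(1)
proof (induction ks)
  case Nil
  then show ?case using assms(2) by simp
next
  case (Cons k ks)
  let ?R = "foldr (\<lambda>k acc. sz n k * acc) ks X"
  have IH: "?R \<in> carrier_mat (2 ^ n) (2 ^ n)"
    "\<And>y. y < 2 ^ n \<Longrightarrow> ?R $$ (vacuum n, y) = (-1) ^ length ks * X $$ (vacuum n, y)"
    using Cons by auto
  have k: "1 \<le> k" "k \<le> n" using Cons.prems by auto
  then have sz: "sz n k \<in> carrier_mat (2 ^ n) (2 ^ n)" by (rule sz_carrier_mat)
  have "(sz n k * ?R) $$ (vacuum n, y) = (-1) * ?R $$ (vacuum n, y)" if "y < 2 ^ n" for y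
    by (rule index_mult_mat_single_row[OF sz IH(1) vacuum_less that vacuum_less])
      (use k in \<open>simp add: index_sz vacuum_less bit_vacuum\<close>)
  then show ?case using sz IH by auto
qed

lemma c_op_carrier_mat:
  assumes "1 \<le> l" "l \<le> n"
  shows "c_op n l \<in> carrier_mat (2 ^ n) (2 ^ n)"
  using sz_product_vacuum_row[OF _ a_op_carrier_mat[OF assms], of "[1..<l]"] assms
  unfolding c_op_def by simp

lemma c_op_vacuum_row:
  assumes "1 \<le> l" "l \<le> n" "y < 2 ^ n"
  shows "c_op n l $$ (vacuum n, y) = (if y = excitation n (l - 1) then (-1) ^ (l - 1) else 0)"
  using sz_product_vacuum_row[OF _ a_op_carrier_mat[OF assms(1,2)], of "[1..<l]"] assms
  unfolding c_op_def by (auto simp: a_op_vacuum_row)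

lemma index_mat_adjoint:
  assumes "A \<in> carrier_mat N N" "x < N" "y < N"
  shows "mat_adjoint A $$ (x, y) = cnj (A $$ (y, x))"
  using assms unfolding mat_adjoint_def by (auto simp: mat_of_rows_index)

lemma mat_adjoint_carrier_mat: "A \<in> carrier_mat N N \<Longrightarrow> mat_adjoint A \<in> carrier_mat N N"
  unfolding mat_adjoint_def by auto

lemma mexp_H_XY_carrier_mat: "mexp (s \<cdot>\<^sub>m H_XY lam \<omega> n) \<in> carrier_mat (2 ^ n) (2 ^ n)"
  by (intro mexp_carrier_mat smult_carrier_mat H_XY_carrier_mat)

lemma mexp_H_XY_vacuum_row:
  assumes "y < 2 ^ n"
  shows "mexp (s \<cdot>\<^sub>m H_XY lam \<omega> n) $$ (vacuum n, y)
    = (if y = vacuum n then exp (- s * pot_sum lam \<omega> n) else 0)"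
proof (rule mexp_eigen_row[OF _ vacuum_less assms])
  show "s \<cdot>\<^sub>m H_XY lam \<omega> n \<in> carrier_mat (2 ^ n) (2 ^ n)" using H_XY_carrier_mat by simp
  fix y :: nat assume "y < 2 ^ n"
  then show "(s \<cdot>\<^sub>m H_XY lam \<omega> n) $$ (vacuum n, y) = (if y = vacuum n then - s * pot_sum lam \<omega> n else 0)"
    using H_XY_carrier_mat[of lam \<omega> n] vacuum_less[of n] by (simp add: H_XY_vacuum_row)
qed

lemma mexp_H_XY_excitations:
  assumes "j < n" "k < n"
  shows "mexp (s \<cdot>\<^sub>m H_XY lam \<omega> n) $$ (excitation n j, excitation n k)
    = mexp (s \<cdot>\<^sub>m excitation_ham lam \<omega> n) $$ (j, k)"
proof (rule mexp_invariant_rows[OF _ _ excitation_eq_iff excitation_less _ assms])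
  show "s \<cdot>\<^sub>m H_XY lam \<omega> n \<in> carrier_mat (2 ^ n) (2 ^ n)" using H_XY_carrier_mat by simp
  show "s \<cdot>\<^sub>m excitation_ham lam \<omega> n \<in> carrier_mat n n" unfolding excitation_ham_def by simp
  fix j y :: nat assume jy: "j < n" "y < 2 ^ n"
  have "(s \<cdot>\<^sub>m H_XY lam \<omega> n) $$ (excitation n j, y) = s * H_XY lam \<omega> n $$ (excitation n j, y)"
    using H_XY_carrier_mat[of lam \<omega> n] jy excitation_less[of n j] by simp
  also have "\<dots> = (\<Sum>k<n. s * (if y = excitation n k then excitation_ham lam \<omega> n $$ (j, k) else 0))"
    unfolding H_XY_excitation_row[OF jy(2,1)] by (rule sum_distrib_left)
  also have "\<dots> = (\<Sum>k<n. if y = excitation n k then (s \<cdot>\<^sub>m excitation_ham lam \<omega> n) $$ (j, k) else 0)"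
    using jy by (intro sum.cong) (auto simp: excitation_ham_def)
  finally show "(s \<cdot>\<^sub>m H_XY lam \<omega> n) $$ (excitation n j, y)
      = (\<Sum>k<n. if y = excitation n k then (s \<cdot>\<^sub>m excitation_ham lam \<omega> n) $$ (j, k) else 0)" .
qed

lemma tau_c_op_vacuum_row:
  assumes "1 \<le> l" "l \<le> n" "y < 2 ^ n"
  shows "tau lam \<omega> n t (c_op n l) $$ (vacuum n, y) =
    exp (- \<i> * t * pot_sum lam \<omega> n) * (-1) ^ (l - 1)
    * mexp ((- \<i> * t) \<cdot>\<^sub>m H_XY lam \<omega> n) $$ (excitation n (l - 1), y)"
proof -
  define E1 where "E1 = mexp ((\<i> * t) \<cdot>\<^sub>m H_XY lam \<omega> n)"
  define E2 where "E2 = mexp ((- \<i> * t) \<cdot>\<^sub>m H_XY lam \<omega> n)"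
  have E1: "E1 \<in> carrier_mat (2 ^ n) (2 ^ n)" and E2: "E2 \<in> carrier_mat (2 ^ n) (2 ^ n)"
    unfolding E1_def E2_def by (rule mexp_H_XY_carrier_mat)+
  have c: "c_op n l \<in> carrier_mat (2 ^ n) (2 ^ n)" using c_op_carrier_mat assms by auto
  have E1c: "E1 * c_op n l \<in> carrier_mat (2 ^ n) (2 ^ n)" using E1 c by (rule mult_carrier_mat)
  have "(E1 * c_op n l) $$ (vacuum n, z) = exp (- \<i> * t * pot_sum lam \<omega> n) * c_op n l $$ (vacuum n, z)"
    if "z < 2 ^ n" for z
    by (rule index_mult_mat_single_row[OF E1 c vacuum_less that vacuum_less])
      (simp add: E1_def mexp_H_XY_vacuum_row)
  then have "(E1 * c_op n l * E2) $$ (vacuum n, y)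
      = exp (- \<i> * t * pot_sum lam \<omega> n) * (-1) ^ (l - 1) * E2 $$ (excitation n (l - 1), y)"
    using assms
    by (intro index_mult_mat_single_row[OF E1c E2 vacuum_less assms(3) excitation_less])
      (simp add: c_op_vacuum_row assms)
  then show ?thesis unfolding tau_def E1_def E2_def .
qed

lemma commutator_carrier_mat:
  "A \<in> carrier_mat N N \<Longrightarrow> B \<in> carrier_mat N N \<Longrightarrow> commutator A B \<in> carrier_mat N N"
  unfolding commutator_def by auto

lemma tau_carrier_mat:
  "A \<in> carrier_mat (2 ^ n) (2 ^ n) \<Longrightarrow> tau lam \<omega> n t A \<in> carrier_mat (2 ^ n) (2 ^ n)"
  unfolding tau_def using mexp_H_XY_carrier_mat by (meson mult_carrier_mat)

text \<open>a_op n r annihilates the vacuum, so only the term tau (c_op n l) * mat_adjoint (a_op n r) of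
  the commutator survives, and its adjoint factor creates the single excitation at site r.\<close>

lemma commutator_vacuum_entry:
  assumes "1 \<le> l" "l \<le> n" "1 \<le> r" "r \<le> n"
  shows "commutator (tau lam \<omega> n t (c_op n l)) (mat_adjoint (a_op n r)) $$ (vacuum n, vacuum n) =
    exp (- \<i> * t * pot_sum lam \<omega> n) * (-1) ^ (l - 1)
    * mexp ((- \<i> * t) \<cdot>\<^sub>m excitation_ham lam \<omega> n) $$ (l - 1, r - 1)"
proof -
  define T where "T = tau lam \<omega> n t (c_op n l)"
  define Ad where "Ad = mat_adjoint (a_op n r)"
  have a: "a_op n r \<in> carrier_mat (2 ^ n) (2 ^ n)" using assms by (intro a_op_carrier_mat)
  then have Ad: "Ad \<in> carrier_mat (2 ^ n) (2 ^ n)" unfolding Ad_def by (rule mat_adjoint_carrier_mat)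
  have T: "T \<in> carrier_mat (2 ^ n) (2 ^ n)"
    unfolding T_def using assms by (intro tau_carrier_mat c_op_carrier_mat)
  have "(T * Ad) $$ (vacuum n, vacuum n) = T $$ (vacuum n, excitation n (r - 1)) * 1"
    by (rule index_mult_mat_single_col[OF T Ad vacuum_less vacuum_less excitation_less])
      (use assms in \<open>simp add: Ad_def index_mat_adjoint[OF a] vacuum_less a_op_vacuum_row\<close>)
  moreover have "(Ad * T) $$ (vacuum n, vacuum n) = 0 * T $$ (vacuum n, vacuum n)"
    by (rule index_mult_mat_single_row[OF Ad T vacuum_less vacuum_less vacuum_less])
      (use assms in \<open>simp add: Ad_def index_mat_adjoint[OF a] vacuum_less a_op_vacuum_col\<close>)
  ultimately have "commutator T Ad $$ (vacuum n, vacuum n) = T $$ (vacuum n, excitation n (r - 1))"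
    unfolding commutator_def using T Ad vacuum_less[of n] by simp
  also have "\<dots> = exp (- \<i> * t * pot_sum lam \<omega> n) * (-1) ^ (l - 1)
      * mexp ((- \<i> * t) \<cdot>\<^sub>m H_XY lam \<omega> n) $$ (excitation n (l - 1), excitation n (r - 1))"
    unfolding T_def using assms by (intro tau_c_op_vacuum_row excitation_less)
  finally show ?thesis
    unfolding T_def Ad_def using assms by (simp add: mexp_H_XY_excitations)
qed

lemma excitation_ham_conj_H_one:
  fixes t :: real
  assumes "j < n" "k < n"
  shows "((- \<i> * t) \<cdot>\<^sub>m excitation_ham lam \<omega> n) $$ (j, k) = (-1) ^ j * (-1) ^ k *
    ((- 2 * \<i> * t) \<cdot>\<^sub>m H_one lam \<omega> n + (\<i> * t * pot_sum lam \<omega> n) \<cdot>\<^sub>m 1\<^sub>m n) $$ (j, k)"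
proof -
  have sign_sq: "(-1::complex) ^ i * (-1) ^ i = 1" for i :: nat
    by (simp add: power_mult_distrib[symmetric])
  have lhs: "((- \<i> * t) \<cdot>\<^sub>m excitation_ham lam \<omega> n) $$ (j, k) = (- \<i> * t) *
     (if j = k then 2 * pot lam \<omega> (Suc j) - pot_sum lam \<omega> n else if j = Suc k \<or> k = Suc j then -2 else 0)"
    using assms by (simp add: excitation_ham_def)
  have rhs: "((- 2 * \<i> * t) \<cdot>\<^sub>m H_one lam \<omega> n + (\<i> * t * pot_sum lam \<omega> n) \<cdot>\<^sub>m 1\<^sub>m n) $$ (j, k)
     = (- 2 * \<i> * t) * (if j = k then pot lam \<omega> (Suc j) else if j = Suc k \<or> k = Suc j then 1 else 0)
       + (\<i> * t * pot_sum lam \<omega> n) * (if j = k then 1 else 0)"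
    using assms by (simp add: H_one_def)
  consider "j = k" | "j = Suc k" | "k = Suc j" | "j \<noteq> k" "j \<noteq> Suc k" "k \<noteq> Suc j" by blast
  then show ?thesis
  proof cases
    case 1
    then show ?thesis unfolding lhs rhs using sign_sq[of k] by (simp add: algebra_simps)
  next
    case 2
    then have "(-1::complex) ^ j * (-1) ^ k = -1" using sign_sq[of k] by simp
    then show ?thesis unfolding lhs rhs using 2 by (simp add: algebra_simps)
  next
    case 3
    then have "(-1::complex) ^ j * (-1) ^ k = -1" using sign_sq[of j] by simp
    then show ?thesis unfolding lhs rhs using 3 by (simp add: algebra_simps)
  next
    case 4
    then show ?thesis unfolding lhs rhs by simp
  qed
qed

lemma norm_exp_imag_pot_sum:
  fixes t :: real
  shows "cmod (exp (\<i> * t * pot_sum lam \<omega> n)) = 1"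
proof -
  have eq: "\<i> * t * pot_sum lam \<omega> n = \<i> * of_real (t * (\<Sum>m = 1..n. fib_pot lam \<omega> m))"
    by (simp add: of_real_sum)
  show ?thesis unfolding eq by (rule norm_exp_i_times)
qed

lemma norm_mexp_excitation_ham:
  fixes t :: real
  assumes "j < n" "k < n"
  shows "cmod (mexp ((- \<i> * t) \<cdot>\<^sub>m excitation_ham lam \<omega> n) $$ (j, k))
       = cmod (mexp ((- 2 * \<i> * t) \<cdot>\<^sub>m H_one lam \<omega> n) $$ (j, k))"
proof -
  define Y where "Y = (- 2 * \<i> * t) \<cdot>\<^sub>m H_one lam \<omega> n"
  define c where "c = \<i> * t * pot_sum lam \<omega> n"
  have Y: "Y \<in> carrier_mat n n" unfolding Y_def H_one_def by auto
  have "mexp ((- \<i> * t) \<cdot>\<^sub>m excitation_ham lam \<omega> n) $$ (j, k)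
      = (-1) ^ j * (-1) ^ k * mexp (Y + c \<cdot>\<^sub>m 1\<^sub>m n) $$ (j, k)"
  proof (rule mexp_diagonal_conj[OF _ _ _ _ assms])
    show "(- \<i> * t) \<cdot>\<^sub>m excitation_ham lam \<omega> n \<in> carrier_mat n n"
      unfolding excitation_ham_def by simp
    show "Y + c \<cdot>\<^sub>m 1\<^sub>m n \<in> carrier_mat n n" using Y by simp
    show "(-1) ^ j * (-1) ^ j = (1::complex)" for j :: nat
      by (simp add: power_mult_distrib[symmetric])
    show "((- \<i> * t) \<cdot>\<^sub>m excitation_ham lam \<omega> n) $$ (j, k) = (-1) ^ j * (-1) ^ k * (Y + c \<cdot>\<^sub>m 1\<^sub>m n) $$ (j, k)"
      if "j < n" "k < n" for j k
      unfolding Y_def c_def using that by (rule excitation_ham_conj_H_one)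
  qed
  also have "\<dots> = (-1) ^ j * (-1) ^ k * (exp c * mexp Y $$ (j, k))"
    using mexp_add_scalar[OF Y assms] by simp
  moreover have "cmod (exp c) = 1"
    unfolding c_def by (rule norm_exp_imag_pot_sum)
  ultimately show ?thesis unfolding Y_def by (simp add: norm_mult norm_power)
qed

theorem lemma4p1:
  fixes lam \<omega> t :: real and n l r :: nat
  assumes "lam > 0"
    and "n \<ge> 2"
    and "0 \<le> \<omega>" and "\<omega> < 1"
    and "1 \<le> l" and "l < n"
    and "l < r" and "r \<le> n"
  shows "opnorm (commutator (tau lam \<omega> n t (c_op n l)) (mat_adjoint (a_op n r)))
           \<ge> cmod (mexp ((- 2 * \<i> * complex_of_real t) \<cdot>\<^sub>m H_one lam \<omega> n) $$ (l - 1, r - 1))"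
proof -
  define C where "C = commutator (tau lam \<omega> n t (c_op n l)) (mat_adjoint (a_op n r))"
  have "C \<in> carrier_mat (2 ^ n) (2 ^ n)"
    unfolding C_def using assms
    by (intro commutator_carrier_mat tau_carrier_mat c_op_carrier_mat mat_adjoint_carrier_mat
        a_op_carrier_mat) auto
  then have "cmod (C $$ (vacuum n, vacuum n)) \<le> opnorm C"
    using vacuum_less by (rule opnorm_ge_diag_entry)
  moreover have "C $$ (vacuum n, vacuum n) = exp (- \<i> * t * pot_sum lam \<omega> n) * (-1) ^ (l - 1)
      * mexp ((- \<i> * t) \<cdot>\<^sub>m excitation_ham lam \<omega> n) $$ (l - 1, r - 1)"
    unfolding C_def using assms by (intro commutator_vacuum_entry) auto
  moreover have "cmod (mexp ((- \<i> * t) \<cdot>\<^sub>m excitation_ham lam \<omega> n) $$ (l - 1, r - 1))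
      = cmod (mexp ((- 2 * \<i> * t) \<cdot>\<^sub>m H_one lam \<omega> n) $$ (l - 1, r - 1))"
    using assms by (intro norm_mexp_excitation_ham) auto
  ultimately show ?thesis
    unfolding C_def using norm_exp_imag_pot_sum[of "- t"] by (simp add: norm_mult norm_power)
qed

end
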